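(* Let $\mathbb D$ be a commutative ring with identity, and let $S\mathcal R=S\mathcal R(\mathbb D)$ be the S-Riordan group over $\mathbb D$. For $k\ge 1$ and $\alpha\in\mathbb D$ let $a_k(\alpha)=(1+\alpha t^k,\,t)\in S\mathcal R$. Then for every $\alpha\in\mathbb D$ and every integer $k\ge 2$, $a_k(\alpha)\in\gamma_2(S\mathcal R)$. Moreover, for every $n\ge 1$ and every $\alpha\in\mathbb D$ with $\alpha\neq 0$, the truncation of $a_1(\alpha)$ to $TS\mathcal R_n$ does not lie in $\gamma_2(TS\mathcal R_n)$.
   Context: For a commutative ring $\mathbb D$ with identity, the Riordan group $\mathcal R(\mathbb D)$ consists of pairs $(g,f)$ of formal power series $g=\sum_{k\ge0}g_kt^k$, $f=\sum_{k\ge1}f_kt^k$ in $\mathbb D[[t]]$ with $g_0,f_1$ units, identified with the infinite lower triangular matrices $(d_{n,k})_{n,k\ge0}$, $d_{n,k}=[t^n]g(t)f(t)^k$; the product is matrix multiplication, i.e. $(g_1,f_1)(g_2,f_2)=(g_1\cdot(g_2\circ f_1),\,f_2\circ f_1)$, with identity $(1,t)$. The S-Riordan group $S\mathcal R(\mathbb D)$ is the subgroup of pairs with $g_0=1$ and $f_1=1$ (all 1s on the main diagonal). For $n\ge0$, $TS\mathcal R_n$ denotes the group of $(n+1)\times(n+1)$ matrices $(d_{i,j})_{0\le i,j\le n}$ obtained by truncating the elements of $S\mathcal R(\mathbb D)$ (the image of the truncation homomorphism). Here $\gamma_2(G)$ denotes the commutator subgroup of $G$ (generated by commutators $[x,y]=x^{-1}y^{-1}xy$).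 *)

theory Defs
  imports "HOL-Computational_Algebra.Formal_Power_Series" "HOL-Algebra.Algebra"
begin

definition SRiordan :: "('a::comm_ring_1 fps \<times> 'a fps) monoid" where
  "SRiordan = \<lparr> carrier = {(g, f). fps_nth g 0 = 1 \<and> fps_nth f 0 = 0 \<and> fps_nth f 1 = 1},
               mult = (\<lambda>(g1, f1) (g2, f2). (g1 * fps_compose g2 f1, fps_compose f2 f1)),
               one = (1, fps_X) \<rparr>"

definition riordan_entry :: "'a::comm_ring_1 fps \<times> 'a fps \<Rightarrow> nat \<Rightarrow> nat \<Rightarrow> 'a" where
  "riordan_entry p i j = fps_nth (fst p * snd p ^ j) i"

text \<open>(n+1)x(n+1) matrices indexed by 0..n, represented as functions, zero outside.\<close>
definition truncate_riordan :: "nat \<Rightarrow> 'a::comm_ring_1 fps \<times> 'a fps \<Rightarrow> nat \<Rightarrow> nat \<Rightarrow> 'a" where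
  "truncate_riordan n p = (\<lambda>i j. if i \<le> n \<and> j \<le> n then riordan_entry p i j else 0)"

definition TSRiordan :: "nat \<Rightarrow> (nat \<Rightarrow> nat \<Rightarrow> 'a::comm_ring_1) monoid" where
  "TSRiordan n = \<lparr> carrier = truncate_riordan n ` carrier SRiordan,
     mult = (\<lambda>A B i j. if i \<le> n \<and> j \<le> n then (\<Sum>k\<le>n. A i k * B k j) else 0),
     one = (\<lambda>i j. if i = j \<and> i \<le> n then 1 else 0) \<rparr>"

definition a_elem :: "nat \<Rightarrow> 'a::comm_ring_1 \<Rightarrow> 'a fps \<times> 'a fps" where
  "a_elem k \<alpha> = (1 + fps_const \<alpha> * fps_X ^ k, fps_X)"

end

(*
  For k >= 2, a_k(alpha) is a commutator: with f = t + alpha (t^k + t^(k+1)) one has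
  (1, f)(1 + t, t) = (1 + f, f) = (1 + alpha t^k, t) (1 + t, t)(1, f), since
  1 + f = (1 + t)(1 + alpha t^k); the hypothesis k >= 2 is what keeps f_1 = 1.
  For k = 1 there is an obstruction: because g_0 = f_1 = 1, the entry d_{1,0} = g_1 is additive
  under the Riordan product, hence a homomorphism to the abelian group (D, +) that kills the
  commutator subgroup. It factors through truncation to TSR_n for n >= 1, and a_1(alpha)
  has g_1 = alpha.
  Most of the work is showing that S-Riordan arrays form a group over an arbitrary commutative
  ring: composition of power series must be multiplicative and associative without the
  integral-domain hypothesis under which Formal_Power_Series proves these facts.
*)
theory Submission
  imports Defs
begin

unbundle fps_syntax

lemma fps_mult_nth_cong:
  assumes "\<And>j. j \<le> n \<Longrightarrow> a $ j = b $ j"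
  shows "(g * a) $ n = (g * b) $ n"
  unfolding fps_mult_nth using assms by (intro sum.cong) auto

lemma fps_mult_nth_cong_start_zero:
  fixes a b c :: "'a::semiring_0 fps"
  assumes c0: "c $ 0 = 0" and eq: "\<And>j. j < n \<Longrightarrow> a $ j = b $ j"
  shows "(c * a) $ n = (c * b) $ n"
  unfolding fps_mult_nth
proof (intro sum.cong refl)
  fix i assume "i \<in> {0..n}"
  then show "c $ i * a $ (n - i) = c $ i * b $ (n - i)"
    by (cases "i = 0") (simp_all add: c0 eq)
qed

lemma fps_compose_nth_cong:
  assumes "\<And>j. j \<le> n \<Longrightarrow> a $ j = b $ j"
  shows "(a oo c) $ n = (b oo c) $ n"
  unfolding fps_compose_nth using assms by (intro sum.cong) auto

lemma fps_compose_nth_eq_partial_sum: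
  fixes a c :: "'a::comm_ring_1 fps"
  assumes c0: "c $ 0 = 0" and "n \<le> m"
  shows "(a oo c) $ n = (\<Sum>i\<le>m. fps_const (a $ i) * c ^ i) $ n"
proof -
  have "(\<Sum>i\<le>m. fps_const (a $ i) * c ^ i) $ n = (\<Sum>i\<le>m. a $ i * (c ^ i) $ n)"
    by (simp add: fps_sum_nth)
  also have "\<dots> = (\<Sum>i\<le>n. a $ i * (c ^ i) $ n)"
    using \<open>n \<le> m\<close> startsby_zero_power_prefix[OF c0]
    by (intro sum.mono_neutral_right) auto
  finally show ?thesis
    by (simp add: fps_compose_nth atLeast0AtMost)
qed

lemma fps_compose_X_mult:
  fixes a c :: "'a::comm_ring_1 fps"
  assumes c0: "c $ 0 = 0"
  shows "(fps_X * a) oo c = c * (a oo c)"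
proof (rule fps_ext)
  fix n
  have "((fps_X * a) oo c) $ n = (\<Sum>i\<le>Suc n. fps_const ((fps_X * a) $ i) * c ^ i) $ n"
    by (rule fps_compose_nth_eq_partial_sum[OF c0]) simp
  also have "\<dots> = (c * (\<Sum>i\<le>n. fps_const (a $ i) * c ^ i)) $ n"
    by (simp add: sum.atMost_Suc_shift sum_distrib_left mult.left_commute del: sum.atMost_Suc)
  also have "\<dots> = (c * (a oo c)) $ n"
    using fps_compose_nth_eq_partial_sum[OF c0] by (intro fps_mult_nth_cong) simp
  finally show "((fps_X * a) oo c) $ n = (c * (a oo c)) $ n" .
qed

lemma fps_const_plus_X_mult_shift:
  fixes a :: "'a::semiring_1 fps"
  shows "fps_const (a $ 0) + fps_X * fps_shift 1 a = a"
  by (rule fps_ext) simp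

lemma fps_compose_mult_distrib_comm_ring:
  fixes a b c :: "'a::comm_ring_1 fps"
  assumes c0: "c $ 0 = 0"
  shows "(a * b) oo c = (a oo c) * (b oo c)"
proof -
  have "((a * b) oo c) $ n = ((a oo c) * (b oo c)) $ n" for n
  proof (induction n arbitrary: a rule: less_induct)
    case (less n)
    \<comment> \<open>Split off a $ 0; the rest is multiplied by c, whose coefficient n sees only
      coefficients below n because c $ 0 = 0.\<close>
    define a' where "a' = fps_shift 1 a"
    have a: "a = fps_const (a $ 0) + fps_X * a'"
      unfolding a'_def by (rule fps_const_plus_X_mult_shift[symmetric])
    have "(a * b) oo c = fps_const (a $ 0) * (b oo c) + c * ((a' * b) oo c)"
      by (subst a) (simp add: distrib_right fps_compose_add_distrib mult.assoc
          fps_compose_X_mult[OF c0] flip: fps_const_mult_apply_left)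
    moreover have "(a oo c) * (b oo c) = fps_const (a $ 0) * (b oo c) + c * ((a' oo c) * (b oo c))"
      by (subst a) (simp add: fps_compose_add_distrib fps_compose_X_mult[OF c0] algebra_simps)
    moreover have "(c * ((a' * b) oo c)) $ n = (c * ((a' oo c) * (b oo c))) $ n"
      using less by (intro fps_mult_nth_cong_start_zero[OF c0])
    ultimately show ?case by simp
  qed
  then show ?thesis by (simp add: fps_eq_iff)
qed

lemma fps_compose_power_comm_ring:
  fixes a c :: "'a::comm_ring_1 fps"
  assumes "c $ 0 = 0"
  shows "(a oo c) ^ n = a ^ n oo c"
  by (induction n) (simp_all add: fps_compose_mult_distrib_comm_ring[OF assms])

lemma fps_compose_assoc_comm_ring:
  fixes a b c :: "'a::comm_ring_1 fps"
  assumes c0: "c $ 0 = 0" and b0: "b $ 0 = 0"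
  shows "a oo (b oo c) = (a oo b) oo c"
proof (rule fps_ext)
  fix n
  define p where "p = (\<Sum>i\<le>n. fps_const (a $ i) * b ^ i)"
  have bc0: "(b oo c) $ 0 = 0" by (simp add: b0)
  have "(a oo (b oo c)) $ n = (\<Sum>i\<le>n. fps_const (a $ i) * (b oo c) ^ i) $ n"
    by (rule fps_compose_nth_eq_partial_sum[OF bc0 order.refl])
  also have "\<dots> = (p oo c) $ n"
    by (simp add: p_def fps_compose_sum_distrib fps_compose_power_comm_ring[OF c0]
        fps_const_mult_apply_left)
  also have "\<dots> = ((a oo b) oo c) $ n"
    using fps_compose_nth_eq_partial_sum[OF b0, of _ n a]
    by (intro fps_compose_nth_cong) (simp add: p_def)
  finally show "(a oo (b oo c)) $ n = ((a oo b) oo c) $ n" .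
qed

(* The recursion solves (fps_compinv a oo a) $ (n+1) = fps_X $ (n+1), whose top term is
   fps_compinv_nth a (n+1) * (a ^ (n+1)) $ (n+1) = fps_compinv_nth a (n+1) when a $ 1 = 1. *)
fun fps_compinv_nth :: "'a::comm_ring_1 fps \<Rightarrow> nat \<Rightarrow> 'a" where
  "fps_compinv_nth a 0 = 0"
| "fps_compinv_nth a (Suc n) =
     fps_X $ Suc n - (\<Sum>i\<le>n. fps_compinv_nth a i * (a ^ i) $ Suc n)"

definition fps_compinv :: "'a::comm_ring_1 fps \<Rightarrow> 'a fps" where
  "fps_compinv a = Abs_fps (fps_compinv_nth a)"

lemma fps_compinv_nth_0 [simp]: "fps_compinv a $ 0 = 0"
  and fps_compinv_nth_1 [simp]: "fps_compinv a $ Suc 0 = 1"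
  by (simp_all add: fps_compinv_def)

lemma fps_compinv_compose:
  fixes a :: "'a::comm_ring_1 fps"
  assumes a0: "a $ 0 = 0" and a1: "a $ 1 = 1"
  shows "fps_compinv a oo a = fps_X"
proof (rule fps_ext)
  fix n show "(fps_compinv a oo a) $ n = fps_X $ n"
  proof (cases n)
    case (Suc m)
    have "(a ^ Suc m) $ Suc m = 1"
      using a1 by (simp add: startsby_zero_power_nth_same[OF a0] del: power_Suc)
    then show ?thesis
      by (simp add: Suc fps_compose_nth fps_compinv_def atLeast0AtMost del: fps_compinv_nth.simps(2))
        (simp add: Suc)
  qed (simp add: fps_compose_nth)
qed

lemma fps_compose_compinv:
  fixes a :: "'a::comm_ring_1 fps"
  assumes a0: "a $ 0 = 0" and a1: "a $ 1 = 1"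
  shows "a oo fps_compinv a = fps_X"
proof -
  let ?h = "fps_compinv a"
  have hh: "fps_compinv ?h oo ?h = fps_X"
    by (rule fps_compinv_compose) simp_all
  have "fps_compinv ?h = fps_compinv ?h oo (?h oo a)"
    by (simp add: fps_compinv_compose[OF a0 a1])
  also have "\<dots> = (fps_compinv ?h oo ?h) oo a"
    by (rule fps_compose_assoc_comm_ring[OF a0]) simp
  also have "\<dots> = a"
    by (simp add: hh a0)
  finally show ?thesis
    using hh by simp
qed

lemma fps_compose_nth_1:
  fixes g f :: "'a::comm_ring_1 fps"
  assumes "f $ 0 = 0"
  shows "(g oo f) $ Suc 0 = g $ Suc 0 * f $ Suc 0"
  using assms by (simp add: fps_compose_nth atLeast0_atMost_Suc)

lemma SRiordan_mult [simp]:
  "(g1, f1) \<otimes>\<^bsub>SRiordan\<^esub> (g2, f2) = (g1 * (g2 oo f1), f2 oo f1)"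
  by (simp add: SRiordan_def)

lemma SRiordan_one [simp]: "\<one>\<^bsub>SRiordan\<^esub> = (1, fps_X)"
  by (simp add: SRiordan_def)

lemma SRiordan_carrier_iff [simp]:
  "(g, f) \<in> carrier SRiordan \<longleftrightarrow> g $ 0 = 1 \<and> f $ 0 = 0 \<and> f $ 1 = 1"
  by (simp add: SRiordan_def)

lemma group_SRiordan: "group (SRiordan :: ('a::comm_ring_1 fps \<times> 'a fps) monoid)"
proof (rule groupI)
  fix x y :: "'a fps \<times> 'a fps"
  assume "x \<in> carrier SRiordan" "y \<in> carrier SRiordan"
  then show "x \<otimes>\<^bsub>SRiordan\<^esub> y \<in> carrier SRiordan"
    by (cases x, cases y) (simp add: fps_compose_nth_1)
next
  fix x y z :: "'a fps \<times> 'a fps"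
  assume "x \<in> carrier SRiordan" "y \<in> carrier SRiordan"
  then show "x \<otimes>\<^bsub>SRiordan\<^esub> y \<otimes>\<^bsub>SRiordan\<^esub> z = x \<otimes>\<^bsub>SRiordan\<^esub> (y \<otimes>\<^bsub>SRiordan\<^esub> z)"
    by (cases x, cases y, cases z)
      (simp add: fps_compose_assoc_comm_ring fps_compose_mult_distrib_comm_ring mult.assoc)
next
  fix x :: "'a fps \<times> 'a fps"
  assume "x \<in> carrier SRiordan"
  then obtain g f where gf: "x = (g, f)" "g $ 0 = 1" "f $ 0 = 0" "f $ 1 = 1"
    by (cases x) simp
  show "\<one>\<^bsub>SRiordan\<^esub> \<otimes>\<^bsub>SRiordan\<^esub> x = x"
    by (simp add: gf)
  define h where "h = fps_compinv f"
  define v where "v = fps_left_inverse (g oo h) 1"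
  have "v * (g oo h) = 1"
    unfolding v_def by (rule fps_left_inverse) (simp add: gf)
  moreover have "f oo h = fps_X"
    unfolding h_def using gf by (simp add: fps_compose_compinv)
  ultimately have "(v, h) \<otimes>\<^bsub>SRiordan\<^esub> x = \<one>\<^bsub>SRiordan\<^esub>"
    by (simp add: gf)
  moreover have "(v, h) \<in> carrier SRiordan"
    by (simp add: v_def h_def)
  ultimately show "\<exists>y\<in>carrier SRiordan. y \<otimes>\<^bsub>SRiordan\<^esub> x = \<one>\<^bsub>SRiordan\<^esub>"
    by blast
qed (simp_all add: SRiordan_def)

lemma fps_mult_compose_nth_eq_sum:
  fixes f g h :: "'a::comm_ring_1 fps"
  assumes f0: "f $ 0 = 0" and "i \<le> m"
  shows "(g * (h oo f)) $ i = (\<Sum>k\<le>m. h $ k * (g * f ^ k) $ i)"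
proof -
  have "(g * (h oo f)) $ i = (g * (\<Sum>k\<le>m. fps_const (h $ k) * f ^ k)) $ i"
    using \<open>i \<le> m\<close> by (intro fps_mult_nth_cong fps_compose_nth_eq_partial_sum[OF f0]) simp
  then show ?thesis
    by (simp add: sum_distrib_left fps_sum_nth mult.left_commute[of g])
qed

lemma riordan_entry_mult:
  assumes p: "p \<in> carrier SRiordan" and "i \<le> n"
  shows "riordan_entry (p \<otimes>\<^bsub>SRiordan\<^esub> q) i j = (\<Sum>k\<le>n. riordan_entry p i k * riordan_entry q k j)"
proof -
  obtain g1 f1 g2 f2 where pq: "p = (g1, f1)" "q = (g2, f2)"
    by (cases p, cases q)
  have f0: "f1 $ 0 = 0" using p by (simp add: pq)
  have "riordan_entry (p \<otimes>\<^bsub>SRiordan\<^esub> q) i j = (g1 * ((g2 * f2 ^ j) oo f1)) $ i"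
    by (simp add: pq riordan_entry_def fps_compose_mult_distrib_comm_ring[OF f0]
        fps_compose_power_comm_ring[OF f0] mult.assoc)
  also have "\<dots> = (\<Sum>k\<le>n. (g2 * f2 ^ j) $ k * (g1 * f1 ^ k) $ i)"
    by (rule fps_mult_compose_nth_eq_sum[OF f0 \<open>i \<le> n\<close>])
  finally show ?thesis
    by (simp add: pq riordan_entry_def mult.commute)
qed

lemma truncate_riordan_mult:
  assumes "p \<in> carrier SRiordan"
  shows "truncate_riordan n (p \<otimes>\<^bsub>SRiordan\<^esub> q) =
    truncate_riordan n p \<otimes>\<^bsub>TSRiordan n\<^esub> truncate_riordan n q"
  using riordan_entry_mult[OF assms] by (auto simp: fun_eq_iff TSRiordan_def truncate_riordan_def)

lemma truncate_riordan_one: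
  "truncate_riordan n \<one>\<^bsub>SRiordan\<^esub> = \<one>\<^bsub>TSRiordan n\<^esub>"
  by (simp add: fun_eq_iff TSRiordan_def truncate_riordan_def riordan_entry_def)

lemma truncate_riordan_hom: "truncate_riordan n \<in> hom SRiordan (TSRiordan n)"
  by (rule homI) (simp_all add: TSRiordan_def truncate_riordan_mult)

lemma group_hom_truncate_riordan: "group_hom SRiordan (TSRiordan n) (truncate_riordan n)"
proof -
  interpret SR: group SRiordan
    by (rule group_SRiordan)
  have "group ((TSRiordan n)\<lparr>carrier := truncate_riordan n ` carrier SRiordan,
      one := truncate_riordan n \<one>\<^bsub>SRiordan\<^esub>\<rparr>)"
    by (rule SR.hom_imp_img_group[OF truncate_riordan_hom])
  then have "group (TSRiordan n)"
    by (simp only: truncate_riordan_one) (simp add: TSRiordan_def)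
  then show ?thesis
    by (intro group_hom.intro group_hom_axioms.intro SR.group_axioms truncate_riordan_hom)
qed

lemma (in group) commutator_mem_derived:
  assumes x: "x \<in> carrier G" and y: "y \<in> carrier G" and z: "z \<in> carrier G"
    and xy: "x \<otimes> y = z \<otimes> (y \<otimes> x)"
  shows "z \<in> derived G (carrier G)"
proof -
  have "z = x \<otimes> y \<otimes> inv x \<otimes> inv y"
    using x y z by (simp add: xy m_assoc)
  then show ?thesis
    unfolding derived_def using x y by (blast intro: generate.incl)
qed

lemma (in group_hom) derived_imp_hom_one:
  assumes H: "comm_group H" and x: "x \<in> derived G (carrier G)"
  shows "h x = \<one>\<^bsub>H\<^esub>"
proof -
  have "h x \<in> h ` derived G (carrier G)"
    using x by blast
  also have "\<dots> = derived H (h ` carrier G)"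
    by (simp add: derived_img)
  also have "\<dots> = {\<one>\<^bsub>H\<^esub>}"
    by (rule comm_group.derived_eq_singleton[OF H]) auto
  finally show ?thesis by simp
qed

definition additive_group :: "'a::ab_group_add monoid" where
  "additive_group = \<lparr>carrier = UNIV, mult = (+), one = 0\<rparr>"

lemma comm_group_additive_group: "comm_group additive_group"
proof (rule comm_groupI)
  fix x :: 'a assume "x \<in> carrier additive_group"
  then show "\<exists>y\<in>carrier additive_group. y \<otimes>\<^bsub>additive_group\<^esub> x = \<one>\<^bsub>additive_group\<^esub>"
    by (intro bexI[of _ "- x"]) (simp_all add: additive_group_def)
qed (simp_all add: additive_group_def ac_simps)

lemma SRiordan_nth_1_hom: "(\<lambda>p. fst p $ 1) \<in> hom SRiordan additive_group"
  by (rule homI) (auto simp: additive_group_def fps_compose_nth_1)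

lemma a_elem_mem_derived_SRiordan:
  fixes \<alpha> :: "'a::comm_ring_1"
  assumes "k \<ge> 2"
  shows "a_elem k \<alpha> \<in> derived SRiordan (carrier SRiordan)"
proof -
  interpret group "SRiordan :: ('a fps \<times> 'a fps) monoid"
    by (rule group_SRiordan)
  define f :: "'a fps" where "f = fps_X + fps_const \<alpha> * (fps_X ^ k + fps_X ^ Suc k)"
  have f: "f $ 0 = 0" "f $ 1 = 1"
    using assms by (simp_all add: f_def)
  have "(1, f) \<otimes>\<^bsub>SRiordan\<^esub> (1 + fps_X, fps_X) =
      a_elem k \<alpha> \<otimes>\<^bsub>SRiordan\<^esub> ((1 + fps_X, fps_X) \<otimes>\<^bsub>SRiordan\<^esub> (1, f))"
    using f by (simp add: a_elem_def fps_compose_add_distrib) (simp add: f_def algebra_simps)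
  then show ?thesis
    by (rule commutator_mem_derived[rotated 3]) (use f assms in \<open>simp_all add: a_elem_def\<close>)
qed

lemma truncate_riordan_nth_1_0:
  assumes "n \<ge> 1"
  shows "truncate_riordan n p 1 0 = fst p $ 1"
  using assms by (simp add: truncate_riordan_def riordan_entry_def)

lemma truncate_a_elem_1_notin_derived:
  fixes \<alpha> :: "'a::comm_ring_1"
  assumes "n \<ge> 1" and "\<alpha> \<noteq> 0"
  shows "truncate_riordan n (a_elem 1 \<alpha>) \<notin> derived (TSRiordan n) (carrier (TSRiordan n))"
proof
  interpret trunc: group_hom SRiordan "TSRiordan n :: (nat \<Rightarrow> nat \<Rightarrow> 'a) monoid" "truncate_riordan n"
    by (rule group_hom_truncate_riordan)
  interpret coeff: group_hom "SRiordan :: ('a fps \<times> 'a fps) monoid" additive_group "\<lambda>p. fst p $ 1"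
    by (intro group_hom.intro group_hom_axioms.intro group_SRiordan SRiordan_nth_1_hom
        comm_group.axioms(2) comm_group_additive_group)
  have carrier_TSRiordan:
    "carrier (TSRiordan n :: (nat \<Rightarrow> nat \<Rightarrow> 'a) monoid) = truncate_riordan n ` carrier SRiordan"
    by (simp add: TSRiordan_def)
  assume "truncate_riordan n (a_elem 1 \<alpha>) \<in> derived (TSRiordan n) (carrier (TSRiordan n))"
  also have "derived (TSRiordan n) (carrier (TSRiordan n)) =
      truncate_riordan n ` derived SRiordan (carrier (SRiordan :: ('a fps \<times> 'a fps) monoid))"
    unfolding carrier_TSRiordan by (rule trunc.derived_img) simp
  finally obtain p where p: "p \<in> derived SRiordan (carrier SRiordan)"
    and eq: "truncate_riordan n (a_elem 1 \<alpha>) = truncate_riordan n p"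
    by blast
  have "\<alpha> = truncate_riordan n (a_elem 1 \<alpha>) 1 0"
    using \<open>n \<ge> 1\<close> by (simp only: truncate_riordan_nth_1_0) (simp add: a_elem_def)
  also have "\<dots> = fst p $ 1"
    using \<open>n \<ge> 1\<close> by (simp only: eq truncate_riordan_nth_1_0)
  also have "\<dots> = 0"
    using coeff.derived_imp_hom_one[OF comm_group_additive_group p] by (simp add: additive_group_def)
  finally show False
    using \<open>\<alpha> \<noteq> 0\<close> by simp
qed

theorem lemma1:
  shows "(\<forall>(\<alpha>::'a::comm_ring_1) k. k \<ge> 2 \<longrightarrow>
            a_elem k \<alpha> \<in> derived SRiordan (carrier SRiordan))
       \<and> (\<forall>(n::nat) (\<alpha>::'a). n \<ge> 1 \<and> \<alpha> \<noteq> 0 \<longrightarrow>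
            truncate_riordan n (a_elem 1 \<alpha>) \<notin> derived (TSRiordan n) (carrier (TSRiordan n)))"
  using a_elem_mem_derived_SRiordan truncate_a_elem_1_notin_derived by blast

end
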